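(* Let $X\in\mathrm{Herm}(N)$ be an invariant random matrix with diagonal vector $x_{\mathrm{diag}}\in\mathbb R^N$ and unordered eigenvalue vector $x_{\mathrm{eig}}\in\mathbb R^N$, and let $\tilde\alpha\in[0,\infty)$. The following are equivalent: (1) $X$ has a heavy tail with index $\tilde\alpha$; (2) $x_{\mathrm{diag}}$ has a heavy tail with index $\tilde\alpha$; (3) $x_{\mathrm{eig}}$ has a heavy tail with index $\tilde\alpha$.
   Context: Invariant means $UXU^\dagger\overset d=X$ for all $U\in\mathrm U(N)$. A random vector $x\in\mathbb R^d$ is heavy-tailed with index $\tilde\alpha$ if $\tilde\alpha=\sup\{m\ge0:\mathbb E[\sup_{a\in\mathbb S^{d-1}}|a^\top x|^m]<\infty\}<\infty$; a random matrix $X\in\mathrm{Herm}(N)$ is heavy-tailed with index $\tilde\alpha$ if $\tilde\alpha=\sup\{m\ge0:\mathbb E[\sup_{A\in\mathbb S_{\mathrm{Herm}(N)}}|\mathrm{Tr}\,AX|^m]<\infty\}<\infty$, where $\mathbb S_{\mathrm{Herm}(N)}=\{A\in\mathrm{Herm}(N):\mathrm{Tr}\,A^2=1\}$. *)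

theory Defs
  imports "HOL-Analysis.Analysis" "HOL-Probability.Probability"
begin

text \<open>Complex N x N matrices, N = CARD('n), as complex^'n^'n.\<close>

definition ctrans :: "complex^'n^'n \<Rightarrow> complex^'n^'n" where
  "ctrans A = (\<chi> i j. cnj (A $ j $ i))"

definition herm :: "(complex^'n^'n) set" where
  "herm = {A. ctrans A = A}"

definition unitary :: "complex^'n^'n \<Rightarrow> bool" where
  "unitary U \<longleftrightarrow> U ** ctrans U = mat 1"

definition diag_mat :: "real^'n \<Rightarrow> complex^'n^'n" where
  "diag_mat v = (\<chi> i j. if i = j then complex_of_real (v $ i) else 0)"

definition diag_vec :: "complex^'n^'n \<Rightarrow> real^'n" where
  "diag_vec A = (\<chi> i. Re (A $ i $ i))"

definition is_eig_vec :: "complex^'n^'n \<Rightarrow> real^'n \<Rightarrow> bool" where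
  "is_eig_vec A v \<longleftrightarrow> (\<exists>U. unitary U \<and> A = U ** diag_mat v ** ctrans U)"

definition invariant_rm :: "'a measure \<Rightarrow> ('a \<Rightarrow> complex^'n^'n) \<Rightarrow> bool" where
  "invariant_rm M X \<longleftrightarrow>
     (\<forall>U. unitary U \<longrightarrow> distr M borel (\<lambda>\<omega>. U ** X \<omega> ** ctrans U) = distr M borel X)"

definition tail_index :: "'a measure \<Rightarrow> ('a \<Rightarrow> real) \<Rightarrow> real \<Rightarrow> bool" where
  "tail_index M S \<alpha> \<longleftrightarrow>
     (SUP m \<in> {m::real. 0 \<le> m \<and> (\<integral>\<^sup>+ \<omega>. ennreal (S \<omega> powr m) \<partial>M) < \<infinity>}. ereal m) = ereal \<alpha>"

definition vec_sup :: "real^'n \<Rightarrow> real" where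
  "vec_sup x = (SUP a \<in> sphere 0 1. \<bar>a \<bullet> x\<bar>)"

definition mat_sup :: "complex^'n^'n \<Rightarrow> real" where
  "mat_sup X = (SUP A \<in> {A \<in> herm. trace (A ** A) = 1}. cmod (trace (A ** X)))"

definition heavy_tailed_vec :: "'a measure \<Rightarrow> ('a \<Rightarrow> real^'n) \<Rightarrow> real \<Rightarrow> bool" where
  "heavy_tailed_vec M x \<alpha> \<longleftrightarrow> tail_index M (\<lambda>\<omega>. vec_sup (x \<omega>)) \<alpha>"

definition heavy_tailed_mat :: "'a measure \<Rightarrow> ('a \<Rightarrow> complex^'n^'n) \<Rightarrow> real \<Rightarrow> bool" where
  "heavy_tailed_mat M X \<alpha> \<longleftrightarrow> tail_index M (\<lambda>\<omega>. mat_sup (X \<omega>)) \<alpha>"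

end

theory Submission
  imports Defs
begin

(* For Hermitian X the supremum defining heavy_tailed_mat is the Frobenius norm of X, and the
   supremum defining heavy_tailed_vec is the Euclidean norm; since the Frobenius norm is unitarily
   invariant, norm X is also the norm of the eigenvalue vector. So all three tail indices are that
   of norm X, once norm (diag X) and norm X are shown to have the same finite moments. One bound is
   norm (diag X) <= norm X. Conversely, every entry of X is controlled by the diagonals of
   U X U^dagger for finitely many unitaries U, and by invariance each of these diagonals has the
   law of diag X. *)

lemma herm_cnj_entry:
  assumes "A \<in> herm"
  shows "A $ j $ i = cnj (A $ i $ j)"
proof -
  have "A $ j $ i = ctrans A $ j $ i"
    using assms by (simp add: herm_def)
  then show ?thesis
    by (simp add: ctrans_def)
qed

lemma herm_scaleR: "A \<in> herm \<Longrightarrow> c *\<^sub>R A \<in> herm"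
  unfolding herm_def ctrans_def by (auto simp: vec_eq_iff)

lemma ctrans_ctrans [simp]: "ctrans (ctrans A) = A"
  by (simp add: ctrans_def vec_eq_iff)

lemma ctrans_mat_one [simp]: "ctrans (mat 1) = mat 1"
  by (simp add: ctrans_def mat_def vec_eq_iff)

lemma mat_one_herm: "mat 1 \<in> herm"
  by (simp add: herm_def)

lemma ctrans_mult: "ctrans (A ** B) = ctrans B ** ctrans A"
  by (simp add: ctrans_def matrix_matrix_mult_def vec_eq_iff mult.commute)

lemma trace_ctrans: "trace (ctrans A) = cnj (trace A)"
  by (simp add: trace_def ctrans_def)

lemma Re_trace_mult_ctrans: "Re (trace (A ** ctrans B)) = A \<bullet> B"
  by (simp add: trace_def matrix_matrix_mult_def ctrans_def inner_vec_def inner_complex_def)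

lemma trace_mult_herm:
  assumes "A \<in> herm" "B \<in> herm"
  shows "trace (A ** B) = complex_of_real (A \<bullet> B)"
proof -
  have "cnj (trace (A ** B)) = trace (ctrans (A ** B))"
    by (simp add: trace_ctrans)
  also have "\<dots> = trace (B ** A)"
    using assms by (simp add: herm_def ctrans_mult)
  also have "\<dots> = trace (A ** B)"
    by (rule trace_mul_sym)
  finally have "cnj (trace (A ** B)) = trace (A ** B)" .
  then have "Im (trace (A ** B)) = 0"
    by (metis Reals_cnj_iff complex_is_Real_iff)
  moreover have "Re (trace (A ** B)) = A \<bullet> B"
    using assms(2) Re_trace_mult_ctrans[of A B] by (simp add: herm_def)
  ultimately show ?thesis
    by (simp add: complex_eq_iff)
qed

lemma unitary_mat_one: "unitary (mat 1)"
  by (simp add: unitary_def)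

lemma unitary_ctrans_mult: "unitary U \<Longrightarrow> ctrans U ** U = mat 1"
  unfolding unitary_def using matrix_left_right_inverse by blast

lemma norm_unitary_conj:
  assumes "unitary U"
  shows "norm (U ** A ** ctrans U) = norm A"
proof -
  have "(U ** A ** ctrans U) ** ctrans (U ** A ** ctrans U)
      = U ** A ** (ctrans U ** U) ** ctrans A ** ctrans U"
    by (simp add: ctrans_mult matrix_mul_assoc)
  also have "\<dots> = U ** (A ** ctrans A) ** ctrans U"
    by (simp add: unitary_ctrans_mult[OF assms] matrix_mul_assoc)
  also have "trace \<dots> = trace (ctrans U ** (U ** (A ** ctrans A)))"
    by (rule trace_mul_sym)
  also have "\<dots> = trace ((ctrans U ** U) ** (A ** ctrans A))"
    by (simp add: matrix_mul_assoc)
  also have "\<dots> = trace (A ** ctrans A)"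
    by (simp add: unitary_ctrans_mult[OF assms])
  finally have "(U ** A ** ctrans U) \<bullet> (U ** A ** ctrans U) = A \<bullet> A"
    by (simp flip: Re_trace_mult_ctrans)
  then show ?thesis
    by (simp add: norm_eq_sqrt_inner)
qed

lemma norm_diag_mat: "norm (diag_mat v) = norm v"
proof -
  have "diag_mat v \<bullet> diag_mat v = v \<bullet> v"
    by (simp add: diag_mat_def inner_vec_def inner_complex_def if_distrib cong: if_cong)
  then show ?thesis
    by (simp add: norm_eq_sqrt_inner)
qed

lemma norm_eq_norm_eig_vec: "is_eig_vec A v \<Longrightarrow> norm A = norm v"
  by (auto simp: is_eig_vec_def norm_unitary_conj norm_diag_mat)

lemma SUP_abs_inner_sphere_eq_norm:
  fixes x :: "'a::real_inner"
  assumes "x \<in> S" "u \<in> S \<inter> sphere 0 1" "\<And>c a. a \<in> S \<Longrightarrow> c *\<^sub>R a \<in> S"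
  shows "(SUP a \<in> S \<inter> sphere 0 1. \<bar>a \<bullet> x\<bar>) = norm x"
proof -
  obtain a0 where a0: "a0 \<in> S \<inter> sphere 0 1" "\<bar>a0 \<bullet> x\<bar> = norm x"
  proof (cases "x = 0")
    case True
    then show ?thesis using that assms(2) by simp
  next
    case False
    then show ?thesis
      using that[of "(1 / norm x) *\<^sub>R x"] assms(1,3) by (simp add: dot_square_norm power2_eq_square)
  qed
  have "\<bar>a \<bullet> x\<bar> \<le> norm x" if "a \<in> S \<inter> sphere 0 1" for a
    using that Cauchy_Schwarz_ineq2[of a x] by simp
  with a0 show ?thesis
    by (intro cSup_eq_maximum) (auto intro: image_eqI[where x = a0, OF sym])
qed

lemma vec_sup_eq_norm: "vec_sup x = norm x"
  using SUP_abs_inner_sphere_eq_norm[of x UNIV "axis undefined 1"] by (simp add: vec_sup_def)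

lemma mat_sup_herm:
  fixes X :: "complex^'n^'n"
  assumes "X \<in> herm"
  shows "mat_sup X = norm X"
proof -
  have unit_sphere: "{A \<in> herm. trace (A ** A) = 1} = herm \<inter> sphere 0 1"
    by (auto simp: trace_mult_herm norm_eq_1)
  have "(mat 1 :: complex^'n^'n) \<noteq> 0"
    by (simp add: vec_eq_iff mat_def)
  then have unit: "sgn (mat 1 :: complex^'n^'n) \<in> herm \<inter> sphere 0 1"
    using herm_scaleR[OF mat_one_herm] by (simp add: norm_sgn sgn_div_norm)
  have "mat_sup X = (SUP A \<in> herm \<inter> sphere 0 1. \<bar>A \<bullet> X\<bar>)"
    unfolding mat_sup_def unit_sphere using trace_mult_herm[OF _ assms] by (intro SUP_cong) auto
  also have "\<dots> = norm X"
    using SUP_abs_inner_sphere_eq_norm[OF assms unit herm_scaleR] .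
  finally show ?thesis .
qed

definition inv_sqrt2 :: complex where
  "inv_sqrt2 = complex_of_real (sqrt (1 / 2))"

lemma cnj_inv_sqrt2 [simp]: "cnj inv_sqrt2 = inv_sqrt2"
  by (simp add: inv_sqrt2_def)

lemma inv_sqrt2_mult_self [simp]: "inv_sqrt2 * inv_sqrt2 = 1 / 2"
  by (simp add: inv_sqrt2_def flip: of_real_mult)

lemma inv_sqrt2_mult_mult: "inv_sqrt2 * (inv_sqrt2 * x) = x / 2"
  by (simp flip: mult.assoc)

definition givens :: "'n \<Rightarrow> 'n \<Rightarrow> complex \<Rightarrow> complex^'n^'n" where
  "givens j k c = (\<chi> a b.
     if a = j then (if b = j then inv_sqrt2 else if b = k then inv_sqrt2 * c else 0)
     else if a = k then (if b = j then - inv_sqrt2 * cnj c else if b = k then inv_sqrt2 else 0)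
     else if b = a then 1 else 0)"

lemma sum_UNIV_two:
  fixes f :: "'n::finite \<Rightarrow> 'b::comm_monoid_add"
  assumes "j \<noteq> k" "\<And>t. t \<noteq> j \<Longrightarrow> t \<noteq> k \<Longrightarrow> f t = 0"
  shows "sum f UNIV = f j + f k"
  using assms by (subst sum.mono_neutral_right[of UNIV "{j, k}"]) auto

lemma unitary_givens:
  assumes jk: "j \<noteq> k" and c: "cnj c * c = 1"
  shows "unitary (givens j k c)"
proof -
  let ?W = "givens j k c"
  have c': "c * cnj c = 1"
    using c by (simp add: mult.commute)
  have "(?W ** ctrans ?W) $ a $ b = mat 1 $ a $ b" for a b
  proof (cases "a = j \<or> a = k")
    case True
    then have "(?W ** ctrans ?W) $ a $ b = ?W$a$j * cnj (?W$b$j) + ?W$a$k * cnj (?W$b$k)"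
      unfolding matrix_matrix_mult_def ctrans_def using jk
      by (simp, intro sum_UNIV_two) (auto simp: givens_def)
    also have "\<dots> = mat 1 $ a $ b"
      using True jk c c'
      by (cases "b = j"; cases "b = k") (auto simp: givens_def mat_def mult_ac inv_sqrt2_mult_mult)
    finally show ?thesis .
  next
    case False
    then have "(?W ** ctrans ?W) $ a $ b = ?W$a$a * cnj (?W$b$a)"
      unfolding matrix_matrix_mult_def ctrans_def
      by (simp, subst sum.mono_neutral_right[of UNIV "{a}"]) (auto simp: givens_def)
    then show ?thesis
      using False by (auto simp: givens_def mat_def)
  qed
  then show ?thesis
    by (simp add: unitary_def vec_eq_iff)
qed

lemma Re_diag_givens_conj:
  assumes jk: "j \<noteq> k" and c: "cnj c * c = 1" and X: "X \<in> herm"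
  shows "Re ((givens j k c ** X ** ctrans (givens j k c)) $ j $ j)
    = Re (X $ j $ j) / 2 + Re (X $ k $ k) / 2 + Re (X $ j $ k * cnj c)"
proof -
  let ?W = "givens j k c"
  have row: "(\<Sum>a\<in>UNIV. ?W $ j $ a * X $ a $ b) = inv_sqrt2 * X $ j $ b + inv_sqrt2 * c * X $ k $ b" for b
    using jk by (subst sum_UNIV_two[OF jk]) (auto simp: givens_def)
  have "(?W ** X ** ctrans ?W) $ j $ j
      = (\<Sum>b\<in>UNIV. (inv_sqrt2 * X $ j $ b + inv_sqrt2 * c * X $ k $ b) * cnj (?W $ j $ b))"
    by (simp add: matrix_matrix_mult_def ctrans_def row)
  also have "\<dots> = (inv_sqrt2 * X$j$j + inv_sqrt2 * c * X$k$j) * inv_sqrt2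
      + (inv_sqrt2 * X$j$k + inv_sqrt2 * c * X$k$k) * (inv_sqrt2 * cnj c)"
    using jk by (subst sum_UNIV_two[OF jk]) (auto simp: givens_def)
  also have "\<dots> = (X$j$j + X$k$k * (cnj c * c) + (c * cnj (X$j$k) + X$j$k * cnj c)) / 2"
    using herm_cnj_entry[OF X, of k j] by (simp add: algebra_simps inv_sqrt2_mult_mult)
  also have "\<dots> = (X$j$j + X$k$k + (X$j$k * cnj c + cnj (X$j$k * cnj c))) / 2"
    using c by (simp add: mult.commute)
  also have "\<dots> = (X$j$j + X$k$k + of_real (2 * Re (X$j$k * cnj c))) / 2"
    by (simp only: complex_add_cnj)
  finally show ?thesis
    by (simp only: Re_divide_numeral plus_complex.sel Re_complex_of_real) simp
qed

lemma norm_diag_vec_le: "norm (diag_vec X) \<le> norm X"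
  unfolding norm_vec_def[of "diag_vec X"] norm_vec_def[of X]
proof (rule L2_set_mono)
  fix i
  have "norm (diag_vec X $ i) \<le> cmod (X $ i $ i)"
    by (simp add: diag_vec_def abs_Re_le_cmod)
  also have "\<dots> \<le> norm (X $ i)"
    by (rule Finite_Cartesian_Product.norm_nth_le)
  finally show "norm (diag_vec X $ i) \<le> norm (X $ i)" .
qed simp

lemma abs_Re_diag_le_norm_diag_vec: "\<bar>Re (X $ i $ i)\<bar> \<le> norm (diag_vec X)"
  using component_le_norm_cart[of "diag_vec X" i] by (simp add: diag_vec_def)

lemma norm_le_sum_cmod_entries: "norm X \<le> (\<Sum>i\<in>UNIV. \<Sum>k\<in>UNIV. cmod (X $ i $ k))"
proof -
  have "norm X \<le> (\<Sum>i\<in>UNIV. norm (X $ i))"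
    by (simp add: norm_vec_def L2_set_le_sum)
  also have "\<dots> \<le> (\<Sum>i\<in>UNIV. \<Sum>k\<in>UNIV. cmod (X $ i $ k))"
    by (intro sum_mono) (simp add: norm_vec_def L2_set_le_sum)
  finally show ?thesis .
qed

(* By Re_diag_givens_conj with c = 1 and c = \<i>, the diagonals of the conjugates by these
   unitaries determine the real and imaginary parts of every off-diagonal entry. *)
definition diag_probes :: "(complex^'n^'n) set" where
  "diag_probes = insert (mat 1) ((\<lambda>((j, k), c). givens j k c) ` ({(j, k). j \<noteq> k} \<times> {1, \<i>}))"

lemma finite_diag_probes: "finite (diag_probes :: (complex^'n^'n) set)"
proof -
  have "finite ({(j, k). j \<noteq> k} \<times> {1, \<i>} :: (('n \<times> 'n) \<times> complex) set)"
    by (intro finite_cartesian_product finite) simp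
  then show ?thesis
    unfolding diag_probes_def by simp
qed

lemma givens_in_diag_probes: "j \<noteq> k \<Longrightarrow> c \<in> {1, \<i>} \<Longrightarrow> givens j k c \<in> diag_probes"
  unfolding diag_probes_def by (intro insertI2 image_eqI[where x = "((j, k), c)"]) auto

lemma unitary_diag_probe: "U \<in> diag_probes \<Longrightarrow> unitary U"
  unfolding diag_probes_def by (auto intro: unitary_mat_one unitary_givens)

lemma cmod_diag_entry_herm_le:
  assumes "X \<in> herm"
  shows "cmod (X $ j $ j) \<le> norm (diag_vec X)"
proof -
  have "Im (X $ j $ j) = 0"
    using herm_cnj_entry[OF assms, of j j] by (metis cnj.sel(2) neg_equal_zero)
  then show ?thesis
    using abs_Re_diag_le_norm_diag_vec[of X j] by (simp add: cmod_def)
qed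

lemma cmod_entry_le_diag_givens_conj:
  assumes jk: "j \<noteq> k" and X: "X \<in> herm"
  shows "cmod (X $ j $ k) \<le> norm (diag_vec (givens j k 1 ** X ** ctrans (givens j k 1)))
    + norm (diag_vec (givens j k \<i> ** X ** ctrans (givens j k \<i>))) + 2 * norm (diag_vec X)"
proof -
  have "Re (X $ j $ k) = Re ((givens j k 1 ** X ** ctrans (givens j k 1)) $ j $ j)
      - Re (X $ j $ j) / 2 - Re (X $ k $ k) / 2"
    using Re_diag_givens_conj[OF jk _ X, of 1] by simp
  moreover have "Im (X $ j $ k) = Re ((givens j k \<i> ** X ** ctrans (givens j k \<i>)) $ j $ j)
      - Re (X $ j $ j) / 2 - Re (X $ k $ k) / 2"
    using Re_diag_givens_conj[OF jk _ X, of \<i>] by simp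
  ultimately show ?thesis
    using cmod_le[of "X $ j $ k"]
      abs_Re_diag_le_norm_diag_vec[of "givens j k 1 ** X ** ctrans (givens j k 1)" j]
      abs_Re_diag_le_norm_diag_vec[of "givens j k \<i> ** X ** ctrans (givens j k \<i>)" j]
      abs_Re_diag_le_norm_diag_vec[of X j] abs_Re_diag_le_norm_diag_vec[of X k]
    by linarith
qed

lemma cmod_entry_le_diag_probes:
  assumes X: "X \<in> herm"
  shows "cmod (X $ j $ k) \<le> 4 * (\<Sum>U\<in>diag_probes. norm (diag_vec (U ** X ** ctrans U)))"
    (is "_ \<le> 4 * ?S")
proof -
  have le_S: "norm (diag_vec (U ** X ** ctrans U)) \<le> ?S" if "U \<in> diag_probes" for U
    using that finite_diag_probes by (intro member_le_sum) auto
  have one: "norm (diag_vec X) \<le> ?S"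
    using le_S[of "mat 1"] by (simp add: diag_probes_def)
  show ?thesis
  proof (cases "j = k")
    case True
    then have "cmod (X $ j $ k) \<le> norm (diag_vec X)"
      using cmod_diag_entry_herm_le[OF X, of j] by simp
    then show ?thesis
      using one norm_ge_zero[of "diag_vec X"] by linarith
  next
    case False
    then show ?thesis
      using cmod_entry_le_diag_givens_conj[OF False X] one
        le_S[OF givens_in_diag_probes[OF False, of 1]] le_S[OF givens_in_diag_probes[OF False, of \<i>]]
      by simp
  qed
qed

lemma norm_le_sum_diag_probes:
  fixes X :: "complex^'n^'n"
  assumes "X \<in> herm"
  shows "norm X \<le> 4 * real CARD('n) ^ 2 * (\<Sum>U\<in>diag_probes. norm (diag_vec (U ** X ** ctrans U)))"
proof -
  have "norm X \<le> (\<Sum>i\<in>UNIV. \<Sum>k\<in>UNIV. cmod (X $ i $ k))"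
    by (rule norm_le_sum_cmod_entries)
  also have "\<dots> \<le> (\<Sum>i\<in>(UNIV::'n set). \<Sum>k\<in>(UNIV::'n set).
      4 * (\<Sum>U\<in>diag_probes. norm (diag_vec (U ** X ** ctrans U))))"
    by (intro sum_mono cmod_entry_le_diag_probes[OF assms])
  finally show ?thesis
    by (simp add: power2_eq_square mult_ac)
qed

lemma powr_sum_le_card_powr_mult:
  assumes "finite A" "\<And>a. a \<in> A \<Longrightarrow> 0 \<le> f a" "0 \<le> (m::real)"
  shows "(\<Sum>a\<in>A. f a) powr m \<le> real (card A) powr m * (\<Sum>a\<in>A. f a powr m)"
proof (cases "A = {}")
  case False
  obtain a0 where "a0 \<in> A" "f a0 = Max (f ` A)"
    using Max_in[of "f ` A"] assms(1) False by fastforce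
  then have a0: "a0 \<in> A" "\<And>a. a \<in> A \<Longrightarrow> f a \<le> f a0"
    using assms(1) by auto
  have "(\<Sum>a\<in>A. f a) powr m \<le> (real (card A) * f a0) powr m"
    using assms a0 sum_bounded_above[of A f "f a0"] by (intro powr_mono2) (auto intro: sum_nonneg)
  also have "\<dots> = real (card A) powr m * f a0 powr m"
    using assms a0 by (simp add: powr_mult)
  also have "\<dots> \<le> real (card A) powr m * (\<Sum>a\<in>A. f a powr m)"
    using assms a0 by (intro mult_left_mono member_le_sum) auto
  finally show ?thesis .
qed simp

definition finite_moment :: "'a measure \<Rightarrow> ('a \<Rightarrow> real) \<Rightarrow> real \<Rightarrow> bool" where
  "finite_moment M S m \<longleftrightarrow> (\<integral>\<^sup>+ \<omega>. ennreal (S \<omega> powr m) \<partial>M) < \<infinity>"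

lemma tail_index_cong_finite_moment:
  assumes "\<And>m. 0 \<le> m \<Longrightarrow> finite_moment M S m \<longleftrightarrow> finite_moment M T m"
  shows "tail_index M S \<alpha> \<longleftrightarrow> tail_index M T \<alpha>"
proof -
  have "{m. 0 \<le> m \<and> finite_moment M S m} = {m. 0 \<le> m \<and> finite_moment M T m}"
    using assms by blast
  then show ?thesis
    by (simp add: tail_index_def finite_moment_def)
qed

lemma finite_moment_cong:
  "(\<And>\<omega>. \<omega> \<in> space M \<Longrightarrow> S \<omega> = T \<omega>) \<Longrightarrow> finite_moment M S m \<longleftrightarrow> finite_moment M T m"
  unfolding finite_moment_def by (simp cong: nn_integral_cong)

lemma finite_moment_mono:
  assumes "finite_moment M T m" "0 \<le> m"
    and "\<And>\<omega>. \<omega> \<in> space M \<Longrightarrow> 0 \<le> S \<omega> \<and> S \<omega> \<le> T \<omega>"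
  shows "finite_moment M S m"
proof -
  have "(\<integral>\<^sup>+ \<omega>. ennreal (S \<omega> powr m) \<partial>M) \<le> (\<integral>\<^sup>+ \<omega>. ennreal (T \<omega> powr m) \<partial>M)"
    using assms(2,3) by (intro nn_integral_mono ennreal_leI powr_mono2) auto
  then show ?thesis
    using assms(1) unfolding finite_moment_def by (rule le_less_trans)
qed

lemma finite_moment_cmult:
  assumes "finite_moment M T m" "T \<in> borel_measurable M" "\<And>\<omega>. \<omega> \<in> space M \<Longrightarrow> 0 \<le> T \<omega>" "0 \<le> c"
  shows "finite_moment M (\<lambda>\<omega>. c * T \<omega>) m"
proof -
  have "(\<integral>\<^sup>+ \<omega>. ennreal ((c * T \<omega>) powr m) \<partial>M) = (\<integral>\<^sup>+ \<omega>. ennreal (c powr m) * ennreal (T \<omega> powr m) \<partial>M)"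
    using assms(3,4) by (intro nn_integral_cong) (simp add: powr_mult ennreal_mult)
  also have "\<dots> = ennreal (c powr m) * (\<integral>\<^sup>+ \<omega>. ennreal (T \<omega> powr m) \<partial>M)"
    using assms(2) by (intro nn_integral_cmult) measurable
  finally show ?thesis
    using assms(1) by (simp add: finite_moment_def ennreal_mult_less_top)
qed

lemma finite_moment_sum:
  assumes "finite I" "0 \<le> m"
    and "\<And>i. i \<in> I \<Longrightarrow> finite_moment M (T i) m"
    and "\<And>i. i \<in> I \<Longrightarrow> T i \<in> borel_measurable M"
    and "\<And>i \<omega>. i \<in> I \<Longrightarrow> \<omega> \<in> space M \<Longrightarrow> 0 \<le> T i \<omega>"
  shows "finite_moment M (\<lambda>\<omega>. \<Sum>i\<in>I. T i \<omega>) m"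
proof -
  define C where "C = real (card I) powr m"
  have "(\<integral>\<^sup>+ \<omega>. ennreal ((\<Sum>i\<in>I. T i \<omega>) powr m) \<partial>M)
      \<le> (\<integral>\<^sup>+ \<omega>. ennreal C * (\<Sum>i\<in>I. ennreal (T i \<omega> powr m)) \<partial>M)"
  proof (rule nn_integral_mono)
    fix \<omega> assume "\<omega> \<in> space M"
    then have "(\<Sum>i\<in>I. T i \<omega>) powr m \<le> C * (\<Sum>i\<in>I. T i \<omega> powr m)"
      unfolding C_def using assms(1,2,5) by (intro powr_sum_le_card_powr_mult) auto
    moreover have "ennreal C * (\<Sum>i\<in>I. ennreal (T i \<omega> powr m)) = ennreal (C * (\<Sum>i\<in>I. T i \<omega> powr m))"
      by (simp add: C_def sum_ennreal ennreal_mult')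
    ultimately show "ennreal ((\<Sum>i\<in>I. T i \<omega>) powr m) \<le> ennreal C * (\<Sum>i\<in>I. ennreal (T i \<omega> powr m))"
      by (simp add: ennreal_leI)
  qed
  also have "\<dots> = ennreal C * (\<integral>\<^sup>+ \<omega>. (\<Sum>i\<in>I. ennreal (T i \<omega> powr m)) \<partial>M)"
    using assms(4) by (intro nn_integral_cmult borel_measurable_sum) measurable
  also have "\<dots> = ennreal C * (\<Sum>i\<in>I. \<integral>\<^sup>+ \<omega>. ennreal (T i \<omega> powr m) \<partial>M)"
    using assms(4) by (subst nn_integral_sum) auto
  also have "\<dots> < \<infinity>"
    using assms(1,3) by (simp add: finite_moment_def ennreal_mult_less_top)
  finally show ?thesis
    unfolding finite_moment_def .
qed

lemma borel_measurable_conj [measurable]: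
  "(\<lambda>Y::complex^'n^'n. U ** Y ** ctrans U) \<in> borel_measurable borel"
  unfolding matrix_matrix_mult_def by (intro borel_measurable_continuous_onI continuous_intros)

lemma borel_measurable_diag_vec [measurable]:
  "(diag_vec :: complex^'n^'n \<Rightarrow> real^'n) \<in> borel_measurable borel"
  unfolding diag_vec_def by (intro borel_measurable_continuous_onI continuous_intros)

lemma finite_moment_conj_invariant:
  assumes "invariant_rm M X" "X \<in> borel_measurable M" "unitary U" "f \<in> borel_measurable borel"
  shows "finite_moment M (\<lambda>\<omega>. f (U ** X \<omega> ** ctrans U)) m \<longleftrightarrow> finite_moment M (\<lambda>\<omega>. f (X \<omega>)) m"
proof -
  have g: "(\<lambda>Y. ennreal (f Y powr m)) \<in> borel_measurable borel"
    using assms(4) by measurable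
  have "(\<integral>\<^sup>+ \<omega>. ennreal (f (U ** X \<omega> ** ctrans U) powr m) \<partial>M)
      = (\<integral>\<^sup>+ Y. ennreal (f Y powr m) \<partial>distr M borel (\<lambda>\<omega>. U ** X \<omega> ** ctrans U))"
    using assms(2) g by (simp add: nn_integral_distr)
  also have "\<dots> = (\<integral>\<^sup>+ Y. ennreal (f Y powr m) \<partial>distr M borel X)"
    using assms(1,3) by (simp add: invariant_rm_def)
  also have "\<dots> = (\<integral>\<^sup>+ \<omega>. ennreal (f (X \<omega>) powr m) \<partial>M)"
    using assms(2) g by (simp add: nn_integral_distr)
  finally show ?thesis
    by (simp add: finite_moment_def)
qed

lemma finite_moment_norm_iff_diag:
  fixes X :: "'a \<Rightarrow> complex^'n^'n"
  assumes inv: "invariant_rm M X" and meas [measurable]: "X \<in> borel_measurable M"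
    and herm: "\<And>\<omega>. \<omega> \<in> space M \<Longrightarrow> X \<omega> \<in> herm" and "0 \<le> m"
  shows "finite_moment M (\<lambda>\<omega>. norm (X \<omega>)) m \<longleftrightarrow> finite_moment M (\<lambda>\<omega>. norm (diag_vec (X \<omega>))) m"
proof
  assume "finite_moment M (\<lambda>\<omega>. norm (X \<omega>)) m"
  then show "finite_moment M (\<lambda>\<omega>. norm (diag_vec (X \<omega>))) m"
    using \<open>0 \<le> m\<close> by (rule finite_moment_mono) (simp add: norm_diag_vec_le)
next
  assume diag: "finite_moment M (\<lambda>\<omega>. norm (diag_vec (X \<omega>))) m"
  let ?D = "\<lambda>U \<omega>. norm (diag_vec (U ** X \<omega> ** ctrans U))"
  have "finite_moment M (?D U) m" if "U \<in> diag_probes" for U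
    using diag finite_moment_conj_invariant[OF inv meas unitary_diag_probe[OF that],
        of "\<lambda>Y. norm (diag_vec Y)"] by simp
  then have "finite_moment M (\<lambda>\<omega>. \<Sum>U\<in>diag_probes. ?D U \<omega>) m"
    using \<open>0 \<le> m\<close> finite_diag_probes by (intro finite_moment_sum) auto
  then have "finite_moment M (\<lambda>\<omega>. 4 * real CARD('n) ^ 2 * (\<Sum>U\<in>diag_probes. ?D U \<omega>)) m"
    by (rule finite_moment_cmult) (auto intro: sum_nonneg)
  then show "finite_moment M (\<lambda>\<omega>. norm (X \<omega>)) m"
    using \<open>0 \<le> m\<close> by (rule finite_moment_mono) (simp add: norm_le_sum_diag_probes[OF herm])
qed

theorem corollary5p7:
  fixes M :: "'a measure"
    and X :: "'a \<Rightarrow> complex^'n^'n"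
    and x_eig :: "'a \<Rightarrow> real^'n"
    and \<alpha> :: real
  assumes "prob_space M"
    and "X \<in> borel_measurable M"
    and "\<forall>\<omega>\<in>space M. X \<omega> \<in> herm"
    and "invariant_rm M X"
    and "x_eig \<in> borel_measurable M"
    and "\<forall>\<omega>\<in>space M. is_eig_vec (X \<omega>) (x_eig \<omega>)"
    and "0 \<le> \<alpha>"
  shows "(heavy_tailed_mat M X \<alpha> \<longleftrightarrow> heavy_tailed_vec M (\<lambda>\<omega>. diag_vec (X \<omega>)) \<alpha>)
       \<and> (heavy_tailed_vec M (\<lambda>\<omega>. diag_vec (X \<omega>)) \<alpha> \<longleftrightarrow> heavy_tailed_vec M x_eig \<alpha>)"
proof -
  have mat: "heavy_tailed_mat M X \<alpha> \<longleftrightarrow> tail_index M (\<lambda>\<omega>. norm (X \<omega>)) \<alpha>"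
    unfolding heavy_tailed_mat_def using assms(3)
    by (intro tail_index_cong_finite_moment finite_moment_cong) (simp add: mat_sup_herm)
  have diag: "heavy_tailed_vec M (\<lambda>\<omega>. diag_vec (X \<omega>)) \<alpha> \<longleftrightarrow> tail_index M (\<lambda>\<omega>. norm (X \<omega>)) \<alpha>"
    unfolding heavy_tailed_vec_def vec_sup_eq_norm using assms(2-4)
    by (intro tail_index_cong_finite_moment) (simp add: finite_moment_norm_iff_diag)
  have eig: "heavy_tailed_vec M x_eig \<alpha> \<longleftrightarrow> tail_index M (\<lambda>\<omega>. norm (X \<omega>)) \<alpha>"
    unfolding heavy_tailed_vec_def vec_sup_eq_norm using assms(6)
    by (intro tail_index_cong_finite_moment finite_moment_cong) (auto simp: norm_eq_norm_eig_vec)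
  show ?thesis
    using mat diag eig by simp
qed

end
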